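(* Let $\mathcal{G}_I$ be the class of all finite irreflexive graphs. (1) A class $\mathcal{C}\subseteq\mathcal{G}_I$ that is downward closed under the homomorphic image ordering is well quasi-ordered (under that ordering) if and only if it is finite. (2) For any finite set $\{O_1,\dots,O_k\}\subseteq\mathcal{G}_I$, the class $\mathrm{Av}(O_1,\dots,O_k)$, taken with respect to either the homomorphic image ordering or the strong homomorphic image ordering, is not well quasi-ordered (under the respective ordering).
   Context: An irreflexive graph is a set with a symmetric edge relation having no loops; homomorphisms map edges to edges (so an edge cannot be collapsed to a single vertex). A homomorphism $\phi$ is strong if additionally every edge of the target between vertices of the image is the image of an edge. Homomorphic image ordering: $A\preceq B$ iff there is a surjective homomorphism $B\to A$; strong homomorphic image ordering: iff there is a surjective strong homomorphism $B\to A$. For a set $B$ of structures, $\mathrm{Av}(B)=\{x\in\mathcal{G}_I : b\not\preceq x \text{ for all } b\in B\}$. Well quasi-ordered means no infinite strictly decreasing sequence and no infinite antichain; graphs are considered up to isomorphism (finite means finitely many isomorphism types). *)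

theory Defs
  imports Main
begin

text \<open>Every finite graph is isomorphic to one on nat vertices; classes of graphs
  are treated up to isomorphism via the orderings and the notion iso_finite.\<close>

type_synonym graph = "nat set \<times> (nat \<times> nat) set"

definition verts :: "graph \<Rightarrow> nat set" where "verts G = fst G"
definition edges :: "graph \<Rightarrow> (nat \<times> nat) set" where "edges G = snd G"

definition GI :: "graph set" where
  "GI = {G. finite (verts G) \<and> edges G \<subseteq> verts G \<times> verts G
            \<and> (\<forall>x y. (x, y) \<in> edges G \<longrightarrow> (y, x) \<in> edges G)
            \<and> (\<forall>x. (x, x) \<notin> edges G)}"

definition is_hom :: "(nat \<Rightarrow> nat) \<Rightarrow> graph \<Rightarrow> graph \<Rightarrow> bool" where
  "is_hom f G H \<longleftrightarrow> f ` verts G \<subseteq> verts H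
     \<and> (\<forall>x y. (x, y) \<in> edges G \<longrightarrow> (f x, f y) \<in> edges H)"

definition is_strong_hom :: "(nat \<Rightarrow> nat) \<Rightarrow> graph \<Rightarrow> graph \<Rightarrow> bool" where
  "is_strong_hom f G H \<longleftrightarrow> is_hom f G H
     \<and> (\<forall>u v. u \<in> f ` verts G \<and> v \<in> f ` verts G \<and> (u, v) \<in> edges H
           \<longrightarrow> (\<exists>x y. (x, y) \<in> edges G \<and> f x = u \<and> f y = v))"

definition hom_le :: "graph \<Rightarrow> graph \<Rightarrow> bool" where
  "hom_le A B \<longleftrightarrow> (\<exists>f. is_hom f B A \<and> f ` verts B = verts A)"

definition strong_hom_le :: "graph \<Rightarrow> graph \<Rightarrow> bool" where
  "strong_hom_le A B \<longleftrightarrow> (\<exists>f. is_strong_hom f B A \<and> f ` verts B = verts A)"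

definition graph_iso :: "graph \<Rightarrow> graph \<Rightarrow> bool" where
  "graph_iso G H \<longleftrightarrow> (\<exists>f. bij_betw f (verts G) (verts H)
      \<and> (\<forall>x\<in>verts G. \<forall>y\<in>verts G. (x, y) \<in> edges G \<longleftrightarrow> (f x, f y) \<in> edges H))"

definition iso_finite :: "graph set \<Rightarrow> bool" where
  "iso_finite C \<longleftrightarrow> (\<exists>F. finite F \<and> F \<subseteq> C \<and> (\<forall>G\<in>C. \<exists>H\<in>F. graph_iso G H))"

definition down_closed :: "(graph \<Rightarrow> graph \<Rightarrow> bool) \<Rightarrow> graph set \<Rightarrow> bool" where
  "down_closed le C \<longleftrightarrow> (\<forall>G\<in>C. \<forall>H\<in>GI. le H G \<longrightarrow> H \<in> C)"

definition wqo_class :: "(graph \<Rightarrow> graph \<Rightarrow> bool) \<Rightarrow> graph set \<Rightarrow> bool" where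
  "wqo_class le C \<longleftrightarrow>
     \<not> (\<exists>s::nat \<Rightarrow> graph. (\<forall>i. s i \<in> C) \<and>
          (\<forall>i. le (s (Suc i)) (s i) \<and> \<not> le (s i) (s (Suc i))))
   \<and> \<not> (\<exists>s::nat \<Rightarrow> graph. (\<forall>i. s i \<in> C) \<and>
          (\<forall>i j. i \<noteq> j \<longrightarrow> \<not> le (s i) (s j)))"

definition Av :: "(graph \<Rightarrow> graph \<Rightarrow> bool) \<Rightarrow> graph set \<Rightarrow> graph set" where
  "Av le B = {x \<in> GI. \<forall>b\<in>B. \<not> le b x}"

end

theory Submission
  imports Defs
begin

text \<open>A surjective homomorphism out of the complete graph \<open>K\<^sub>n\<close> onto a loopless graph must be
  injective, so complete graphs of different orders are pairwise incomparable, while every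
  graph on \<open>n\<close> vertices has \<open>K\<^sub>n\<close> as a homomorphic image. Hence a downward closed class
  containing graphs of unbounded order contains an infinite antichain of complete graphs, and
  \<open>Av(B)\<close> contains every \<open>K\<^sub>n\<close> whose order exceeds that of all members of \<open>B\<close>; the strong
  ordering is finer, so the same antichain works there. Conversely, if a downward closed class
  has bounded orders it has only finitely many isomorphism types, and then any infinite
  sequence repeats a type, which rules out both infinite antichains and strictly descending
  chains.\<close>

lemma GI_edges_subset: "G \<in> GI \<Longrightarrow> edges G \<subseteq> verts G \<times> verts G"
  by (simp add: GI_def)

lemma GI_loopless: "G \<in> GI \<Longrightarrow> (x, x) \<notin> edges G"
  by (simp add: GI_def)

lemma hom_le_refl: "hom_le A A"
  unfolding hom_le_def is_hom_def by (rule exI[of _ id]) auto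

lemma hom_le_trans:
  assumes "hom_le A B" "hom_le B D"
  shows "hom_le A D"
proof -
  obtain f where f: "is_hom f B A" "f ` verts B = verts A"
    using assms(1) by (auto simp: hom_le_def)
  obtain g where g: "is_hom g D B" "g ` verts D = verts B"
    using assms(2) by (auto simp: hom_le_def)
  have onto: "(f \<circ> g) ` verts D = verts A"
    by (metis f(2) g(2) image_comp)
  have "is_hom (f \<circ> g) D A"
    using f(1) g(1) onto by (auto simp: is_hom_def)
  with onto show ?thesis unfolding hom_le_def by blast
qed

lemma strong_hom_le_imp_hom_le: "strong_hom_le A B \<Longrightarrow> hom_le A B"
  by (auto simp: strong_hom_le_def is_strong_hom_def hom_le_def)

lemma graph_iso_sym:
  assumes "graph_iso G H"
  shows "graph_iso H G"
proof -
  obtain f where f: "bij_betw f (verts G) (verts H)"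
    and e: "\<forall>x\<in>verts G. \<forall>y\<in>verts G. (x, y) \<in> edges G \<longleftrightarrow> (f x, f y) \<in> edges H"
    using assms by (auto simp: graph_iso_def)
  define g where "g = inv_into (verts G) f"
  have g: "bij_betw g (verts H) (verts G)"
    using f by (simp add: g_def bij_betw_inv_into)
  have "(u, v) \<in> edges H \<longleftrightarrow> (g u, g v) \<in> edges G" if "u \<in> verts H" "v \<in> verts H" for u v
    using e[rule_format, of "g u" "g v"] g f that
    by (simp add: g_def bij_betw_apply bij_betw_inv_into_right)
  with g show ?thesis by (auto simp: graph_iso_def)
qed

lemma graph_iso_hom_le:
  assumes "graph_iso G H" "edges G \<subseteq> verts G \<times> verts G"
  shows "hom_le H G"
proof -
  obtain f where f: "bij_betw f (verts G) (verts H)"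
    "\<forall>x\<in>verts G. \<forall>y\<in>verts G. (x, y) \<in> edges G \<longleftrightarrow> (f x, f y) \<in> edges H"
    using assms(1) by (auto simp: graph_iso_def)
  show ?thesis unfolding hom_le_def is_hom_def
    by (rule exI[of _ f]) (use f assms(2) in \<open>auto simp: bij_betw_def\<close>)
qed

definition relabel :: "(nat \<Rightarrow> nat) \<Rightarrow> graph \<Rightarrow> graph" where
  "relabel h G = (h ` verts G, map_prod h h ` edges G)"

lemma verts_relabel [simp]: "verts (relabel h G) = h ` verts G"
  and edges_relabel [simp]: "edges (relabel h G) = map_prod h h ` edges G"
  by (simp_all add: relabel_def verts_def edges_def)

lemma relabel_edge_iff:
  assumes "G \<in> GI" "inj_on h (verts G)" "x \<in> verts G" "y \<in> verts G"
  shows "(h x, h y) \<in> edges (relabel h G) \<longleftrightarrow> (x, y) \<in> edges G"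
proof
  assume "(h x, h y) \<in> edges (relabel h G)"
  then obtain a b where ab: "(a, b) \<in> edges G" "h a = h x" "h b = h y" by auto
  then have "a \<in> verts G" "b \<in> verts G" using assms(1) by (auto simp: GI_def)
  then show "(x, y) \<in> edges G"
    using ab assms(2-4) by (auto dest: inj_onD)
qed auto

lemma relabel_in_GI:
  assumes "G \<in> GI" "inj_on h (verts G)"
  shows "relabel h G \<in> GI"
proof -
  have "(x, x) \<notin> edges (relabel h G)" for x
  proof
    assume "(x, x) \<in> edges (relabel h G)"
    then obtain a b where "(a, b) \<in> edges G" "x = h a" "x = h b" by auto
    moreover from this have "a = b"
      using assms by (auto simp: GI_def dest: inj_onD)
    ultimately show False using assms(1) by (auto simp: GI_def)
  qed
  with assms(1) show ?thesis by (fastforce simp: GI_def)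
qed

lemma graph_iso_relabel:
  assumes "G \<in> GI" "inj_on h (verts G)"
  shows "graph_iso G (relabel h G)"
  unfolding graph_iso_def
  by (rule exI[of _ h]) (use assms relabel_edge_iff[OF assms] in \<open>auto simp: bij_betw_def\<close>)

lemma hom_le_relabel: "hom_le (relabel h G) G"
  unfolding hom_le_def is_hom_def by (rule exI[of _ h]) auto

lemma canonical_copy:
  assumes "G \<in> GI"
  obtains H where "H \<in> GI" "hom_le H G" "graph_iso G H" "verts H = {0..<card (verts G)}"
proof -
  have "finite (verts G)" using assms by (simp add: GI_def)
  then obtain h where h: "bij_betw h (verts G) {0..<card (verts G)}"
    using ex_bij_betw_finite_nat by blast
  then have "inj_on h (verts G)" by (simp add: bij_betw_def)
  with assms h show ?thesis
    using that[of "relabel h G"] relabel_in_GI graph_iso_relabel hom_le_relabel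
    by (simp add: bij_betw_def)
qed

definition complete_graph :: "nat \<Rightarrow> graph" where
  "complete_graph n = ({0..<n}, {(i, j). i < n \<and> j < n \<and> i \<noteq> j})"

lemma complete_graph_in_GI: "complete_graph n \<in> GI"
  by (auto simp: GI_def complete_graph_def verts_def edges_def)

lemma card_verts_if_hom_le_complete_graph:
  assumes "hom_le A (complete_graph n)" "\<forall>x. (x, x) \<notin> edges A"
  shows "card (verts A) = n"
proof -
  obtain f where f: "is_hom f (complete_graph n) A" "f ` {0..<n} = verts A"
    using assms(1) by (auto simp: hom_le_def complete_graph_def verts_def)
  have "inj_on f {0..<n}"
  proof (rule inj_onI, rule ccontr)
    fix x y assume xy: "x \<in> {0..<n}" "y \<in> {0..<n}" "x \<noteq> y" and "f x = f y"
    have "(f x, f y) \<in> edges A"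
      using f(1) xy by (auto simp: is_hom_def complete_graph_def edges_def)
    with \<open>f x = f y\<close> have "(f x, f x) \<in> edges A" by simp
    with assms(2) show False by blast
  qed
  with f(2) show ?thesis using card_image by fastforce
qed

lemma hom_le_complete_graph_iff: "hom_le (complete_graph m) (complete_graph n) \<longleftrightarrow> m = n"
proof
  assume "hom_le (complete_graph m) (complete_graph n)"
  moreover have "\<forall>x. (x, x) \<notin> edges (complete_graph m)"
    by (simp add: complete_graph_def edges_def)
  ultimately have "card (verts (complete_graph m)) = n"
    by (rule card_verts_if_hom_le_complete_graph)
  then show "m = n" by (simp add: complete_graph_def verts_def)
qed (simp add: hom_le_refl)

lemma complete_graph_hom_le:
  assumes "G \<in> GI"
  shows "hom_le (complete_graph (card (verts G))) G"
proof -
  obtain H where H: "H \<in> GI" "hom_le H G" "verts H = {0..<card (verts G)}"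
    using canonical_copy[OF assms] by blast
  have "hom_le (complete_graph (card (verts G))) H"
    unfolding hom_le_def is_hom_def
    by (rule exI[of _ id]) (use H in \<open>auto simp: GI_def complete_graph_def verts_def edges_def\<close>)
  then show ?thesis using H(2) by (rule hom_le_trans)
qed

lemma antichain_not_wqo_class:
  fixes s :: "nat \<Rightarrow> graph"
  assumes "\<forall>i. s i \<in> C" "\<forall>i j. i \<noteq> j \<longrightarrow> \<not> le (s i) (s j)"
  shows "\<not> wqo_class le C"
  using assms unfolding wqo_class_def by blast

lemma wqo_class_if_good:
  assumes refl: "\<And>A. le A A"
    and trans: "\<And>A B D. le A B \<Longrightarrow> le B D \<Longrightarrow> le A D"
    and good: "\<And>s :: nat \<Rightarrow> graph. \<forall>i. s i \<in> C \<Longrightarrow> \<exists>i j. i < j \<and> le (s i) (s j)"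
  shows "wqo_class le C"
  unfolding wqo_class_def
proof (intro conjI notI; elim exE conjE)
  fix s :: "nat \<Rightarrow> graph"
  assume sC: "\<forall>i. s i \<in> C" and desc: "\<forall>i. le (s (Suc i)) (s i) \<and> \<not> le (s i) (s (Suc i))"
  obtain i j where ij: "i < j" "le (s i) (s j)" using good[OF sC] by blast
  have "le (s k) (s (Suc i))" if "Suc i \<le> k" for k
    using that
  proof (induction rule: dec_induct)
    case (step k)
    then show ?case using desc trans by meson
  qed (rule refl)
  with ij have "le (s i) (s (Suc i))" using trans by (meson Suc_leI)
  with desc show False by blast
next
  fix s :: "nat \<Rightarrow> graph"
  assume sC: "\<forall>i. s i \<in> C" and anti: "\<forall>i j. i \<noteq> j \<longrightarrow> \<not> le (s i) (s j)"
  obtain i j where "i < j" "le (s i) (s j)" using good[OF sC] by blast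
  with anti show False by simp
qed

lemma iso_finite_good:
  fixes s :: "nat \<Rightarrow> graph"
  assumes "C \<subseteq> GI" "iso_finite C" "\<forall>i. s i \<in> C"
  shows "\<exists>i j. i < j \<and> hom_le (s i) (s j)"
proof -
  obtain F where F: "finite F" "F \<subseteq> C" "\<forall>G\<in>C. \<exists>H\<in>F. graph_iso G H"
    using assms(2) by (auto simp: iso_finite_def)
  have "\<forall>i. \<exists>H. H \<in> F \<and> graph_iso (s i) H" using F(3) assms(3) by blast
  then obtain r where r: "\<And>i. r i \<in> F" "\<And>i. graph_iso (s i) (r i)"
    by metis
  have "finite (range r)" using F(1) r(1) by (meson finite_subset image_subsetI)
  then have "\<not> inj r" using finite_imageD by blast
  then obtain i j where ij: "i < j" "r i = r j"
    by (metis inj_def linorder_neq_iff)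
  have "r i \<in> GI" "s j \<in> GI" using r(1) F(2) assms(1,3) by blast+
  then have "hom_le (s i) (r i)" "hom_le (r j) (s j)"
    using graph_iso_hom_le[OF graph_iso_sym[OF r(2)]] graph_iso_hom_le[OF r(2)] GI_edges_subset
    by blast+
  with ij show ?thesis using hom_le_trans by metis
qed

lemma iso_finite_imp_wqo_class:
  assumes "C \<subseteq> GI" "iso_finite C"
  shows "wqo_class hom_le C"
  using hom_le_refl hom_le_trans iso_finite_good[OF assms] by (rule wqo_class_if_good)

lemma not_wqo_class_if_infinitely_many_complete_graphs:
  assumes "infinite {n. complete_graph n \<in> C}" "\<And>G H. le G H \<Longrightarrow> hom_le G H"
  shows "\<not> wqo_class le C"
proof -
  obtain f :: "nat \<Rightarrow> nat" where f: "inj f" "range f \<subseteq> {n. complete_graph n \<in> C}"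
    using infinite_countable_subset[OF assms(1)] by blast
  show ?thesis
  proof (rule antichain_not_wqo_class[of "\<lambda>i. complete_graph (f i)"])
    show "\<forall>i. complete_graph (f i) \<in> C" using f(2) by blast
    show "\<forall>i j. i \<noteq> j \<longrightarrow> \<not> le (complete_graph (f i)) (complete_graph (f j))"
      using f(1) assms(2) hom_le_complete_graph_iff by (metis injD)
  qed
qed

lemma iso_finite_if_card_bounded:
  assumes "C \<subseteq> GI" "down_closed hom_le C" "\<forall>G\<in>C. card (verts G) \<le> N"
  shows "iso_finite C"
proof -
  define S :: "graph set" where "S = Pow {0..<N} \<times> Pow ({0..<N} \<times> {0..<N})"
  have "\<exists>H\<in>C \<inter> S. graph_iso G H" if G: "G \<in> C" for G
  proof -
    have "G \<in> GI" using G assms(1) by blast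
    then obtain H where H: "H \<in> GI" "hom_le H G" "graph_iso G H" "verts H = {0..<card (verts G)}"
      by (rule canonical_copy)
    have "H \<in> C" using assms(2) G H by (auto simp: down_closed_def)
    moreover have "verts H \<subseteq> {0..<N}" using H(4) assms(3) G by auto
    then have "H \<in> S"
      using GI_edges_subset[OF H(1)] by (cases H) (auto simp: S_def verts_def edges_def)
    ultimately show ?thesis using H(3) by blast
  qed
  moreover have "finite S" by (simp add: S_def)
  ultimately show ?thesis unfolding iso_finite_def by (intro exI[of _ "C \<inter> S"]) auto
qed

lemma down_closed_wqo_class_imp_iso_finite:
  assumes "C \<subseteq> GI" "down_closed hom_le C" "wqo_class hom_le C"
  shows "iso_finite C"
proof (cases "finite ((\<lambda>G. card (verts G)) ` C)")
  case True
  then show ?thesis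
    using assms(1,2) by (intro iso_finite_if_card_bounded[where N = "Max ((\<lambda>G. card (verts G)) ` C)"]) auto
next
  case False
  have "(\<lambda>G. card (verts G)) ` C \<subseteq> {n. complete_graph n \<in> C}"
    using assms(1,2) complete_graph_hom_le complete_graph_in_GI by (auto simp: down_closed_def)
  with False have "infinite {n. complete_graph n \<in> C}" using finite_subset by blast
  with assms(3) show ?thesis using not_wqo_class_if_infinitely_many_complete_graphs by blast
qed

lemma Av_not_wqo_class:
  assumes "finite B" "B \<subseteq> GI" "\<And>G H. le G H \<Longrightarrow> hom_le G H"
  shows "\<not> wqo_class le (Av le B)"
proof (rule not_wqo_class_if_infinitely_many_complete_graphs[OF _ assms(3)])
  define N where "N = Max (insert 0 ((\<lambda>b. card (verts b)) ` B))"
  have "complete_graph n \<in> Av le B" if "N < n" for n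
  proof -
    have "\<not> le b (complete_graph n)" if "b \<in> B" for b
    proof
      assume "le b (complete_graph n)"
      then have "card (verts b) = n"
        using assms(2,3) \<open>b \<in> B\<close> card_verts_if_hom_le_complete_graph by (blast dest: GI_loopless)
      moreover have "card (verts b) \<le> N" using assms(1) \<open>b \<in> B\<close> by (simp add: N_def)
      ultimately show False using \<open>N < n\<close> by simp
    qed
    then show ?thesis by (simp add: Av_def complete_graph_in_GI)
  qed
  then have "{N<..} \<subseteq> {n. complete_graph n \<in> Av le B}" by auto
  then show "infinite {n. complete_graph n \<in> Av le B}"
    using infinite_Ioi finite_subset by blast
qed

theorem theorem3p1:
  shows "(\<forall>C. C \<subseteq> GI \<and> down_closed hom_le C \<longrightarrow> (wqo_class hom_le C \<longleftrightarrow> iso_finite C))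
       \<and> (\<forall>B. finite B \<and> B \<subseteq> GI \<longrightarrow>
            \<not> wqo_class hom_le (Av hom_le B) \<and> \<not> wqo_class strong_hom_le (Av strong_hom_le B))"
proof (intro conjI allI impI)
  fix C assume "C \<subseteq> GI \<and> down_closed hom_le C"
  then show "wqo_class hom_le C \<longleftrightarrow> iso_finite C"
    using down_closed_wqo_class_imp_iso_finite iso_finite_imp_wqo_class by blast
next
  fix B assume B: "finite B \<and> B \<subseteq> GI"
  then show "\<not> wqo_class hom_le (Av hom_le B)"
    by (intro Av_not_wqo_class) auto
  from B show "\<not> wqo_class strong_hom_le (Av strong_hom_le B)"
    by (intro Av_not_wqo_class strong_hom_le_imp_hom_le) auto
qed

end
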